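(* Let $G_1=(V_1,E_1,\ell_1)$ and $G_2=(V_2,E_2,\ell_2)$ be finite node-labeled directed graphs, let $\mathcal{L}:V_1\times V_2\to[0,1]$ satisfy $\mathcal{L}(u,v)=1$ if and only if $\ell_1(u)=\ell_2(v)$, and let $w^+,w^-$ satisfy $0<w^+$, $0<w^-$, $w^++w^-<1$. Define $F^0=\mathcal{L}$ and, for $k\ge1$, $$F^k(u,v)=w^+A^k(N^+_{G_1}(u),N^+_{G_2}(v))+w^-A^k(N^-_{G_1}(u),N^-_{G_2}(v))+(1-w^+-w^-)\mathcal{L}(u,v),$$ where for $S_1\subseteq V_1$, $S_2\subseteq V_2$: $A^k(S_1,S_2)=1$ if $S_1=S_2=\emptyset$; $A^k(S_1,S_2)=0$ if exactly one of $S_1,S_2$ is empty; and otherwise $$A^k(S_1,S_2)=\frac{1}{\sqrt{|S_1|\,|S_2|}}\max_{g}\sum_{(x,y)\in g}F^{k-1}(x,y),$$ the maximum ranging over all sets $g\subseteq S_1\times S_2$ that are the graph of an injective map from the smaller of $S_1,S_2$ into the larger (if $|S_1|\le|S_2|$, injective maps $S_1\to S_2$; otherwise injective maps $S_2\to S_1$, written as pairs $(x,y)$ with $x\in S_1$, $y\in S_2$). Let $\mathrm{FSim}_{bj}(u,v)=\lim_{k\to\infty}F^k(u,v)$ (the limit exists). Then: (P1) $0\le\mathrm{FSim}_{bj}(u,v)\le1$; (P2) $\mathrm{FSim}_{bj}(u,v)=1$ if and only if $u$ is bijectively simulated by $v$, i.e. there exists a bijective simulation $R\subseteq V_1\times V_2$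 with $(u,v)\in R$; (P3) if moreover $\mathcal{L}(u,v)=\mathcal{L}'(v,u)$ for all $u,v$, where $\mathcal{L}'$ is the label function used when computing the same scheme from $G_2$ to $G_1$, then $\mathrm{FSim}_{bj}(u,v)$ computed from $G_1$ to $G_2$ equals $\mathrm{FSim}_{bj}(v,u)$ computed from $G_2$ to $G_1$ (in particular, when $G_1=G_2$ and $\mathcal{L}$ is symmetric, $\mathrm{FSim}_{bj}(u,v)=\mathrm{FSim}_{bj}(v,u)$).
   Context: $N^+_G(u)=\{u':(u,u')\in E(G)\}$ and $N^-_G(u)=\{u':(u',u)\in E(G)\}$. A relation $R\subseteq V_1\times V_2$ is a bijective simulation if for every $(u,v)\in R$: $\ell_1(u)=\ell_2(v)$; there is a bijection $\lambda_1:N^+_{G_1}(u)\to N^+_{G_2}(v)$ with $(u',\lambda_1(u'))\in R$ for all $u'\in N^+_{G_1}(u)$; and there is a bijection $\lambda_2:N^-_{G_1}(u)\to N^-_{G_2}(v)$ with $(u'',\lambda_2(u''))\in R$ for all $u''\in N^-_{G_1}(u)$. *)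

theory Defs
  imports Complex_Main
begin

definition out_nbrs :: "('a \<times> 'a) set \<Rightarrow> 'a \<Rightarrow> 'a set" where
  "out_nbrs E u = {u'. (u, u') \<in> E}"

definition in_nbrs :: "('a \<times> 'a) set \<Rightarrow> 'a \<Rightarrow> 'a set" where
  "in_nbrs E u = {u'. (u', u) \<in> E}"

definition inj_matchings :: "'a set \<Rightarrow> 'b set \<Rightarrow> ('a \<times> 'b) set set" where
  "inj_matchings S1 S2 =
     (if card S1 \<le> card S2
      then {g. \<exists>f. inj_on f S1 \<and> f ` S1 \<subseteq> S2 \<and> g = (\<lambda>x. (x, f x)) ` S1}
      else {g. \<exists>f. inj_on f S2 \<and> f ` S2 \<subseteq> S1 \<and> g = (\<lambda>y. (f y, y)) ` S2})"

definition A_sim :: "('a \<Rightarrow> 'b \<Rightarrow> real) \<Rightarrow> 'a set \<Rightarrow> 'b set \<Rightarrow> real" where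
  "A_sim Fp S1 S2 =
     (if S1 = {} \<and> S2 = {} then 1
      else if S1 = {} \<or> S2 = {} then 0
      else (1 / sqrt (real (card S1) * real (card S2))) *
           Max ((\<lambda>g. \<Sum>(x, y)\<in>g. Fp x y) ` inj_matchings S1 S2))"

primrec F_sim :: "('a \<times> 'a) set \<Rightarrow> ('b \<times> 'b) set \<Rightarrow> ('a \<Rightarrow> 'b \<Rightarrow> real) \<Rightarrow> real \<Rightarrow> real
                  \<Rightarrow> nat \<Rightarrow> 'a \<Rightarrow> 'b \<Rightarrow> real" where
  "F_sim E1 E2 L wp wm 0 = L"
| "F_sim E1 E2 L wp wm (Suc k) =
     (\<lambda>u v. wp * A_sim (F_sim E1 E2 L wp wm k) (out_nbrs E1 u) (out_nbrs E2 v)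
          + wm * A_sim (F_sim E1 E2 L wp wm k) (in_nbrs E1 u) (in_nbrs E2 v)
          + (1 - wp - wm) * L u v)"

definition FSim_bj :: "('a \<times> 'a) set \<Rightarrow> ('b \<times> 'b) set \<Rightarrow> ('a \<Rightarrow> 'b \<Rightarrow> real) \<Rightarrow> real \<Rightarrow> real
                  \<Rightarrow> 'a \<Rightarrow> 'b \<Rightarrow> real" where
  "FSim_bj E1 E2 L wp wm u v = lim (\<lambda>k. F_sim E1 E2 L wp wm k u v)"

definition bij_simulation ::
  "'a set \<Rightarrow> ('a \<times> 'a) set \<Rightarrow> ('a \<Rightarrow> 'l) \<Rightarrow> 'b set \<Rightarrow> ('b \<times> 'b) set \<Rightarrow> ('b \<Rightarrow> 'l)
   \<Rightarrow> ('a \<times> 'b) set \<Rightarrow> bool" where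
  "bij_simulation V1 E1 l1 V2 E2 l2 R \<longleftrightarrow>
     R \<subseteq> V1 \<times> V2 \<and>
     (\<forall>(u, v)\<in>R. l1 u = l2 v \<and>
        (\<exists>lam1. bij_betw lam1 (out_nbrs E1 u) (out_nbrs E2 v) \<and> (\<forall>u'\<in>out_nbrs E1 u. (u', lam1 u') \<in> R)) \<and>
        (\<exists>lam2. bij_betw lam2 (in_nbrs E1 u) (in_nbrs E2 v) \<and> (\<forall>u''\<in>in_nbrs E1 u. (u'', lam2 u'') \<in> R)))"

end

theory Submission
  imports Defs
begin

text \<open>
  A matching g of size min(|S1|,|S2|) satisfies |g| \<le> sqrt(|S1| |S2|), so A is 1-Lipschitz in the
  sup-norm of its argument and the update F^k \<mapsto> F^(k+1) is a contraction with factor w+ + w-.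
  Hence F^k converges to a fixed point FSim of the update, with values in [0,1].
  Since all three weights are positive, FSim(u,v) = 1 forces L(u,v) = 1 and both A-values to be 1;
  an A-value 1 forces |S1| = |S2| (equality in min \<le> sqrt) and a perfect matching of pairs of value 1.
  So the pairs of value 1 form a bijective simulation. Conversely, along a bijective simulation
  every F^k is 1, by induction. Transposing matchings shows that A, hence every F^k, is
  invariant under exchanging the two graphs.
\<close>

lemma out_nbrs_subset: "E \<subseteq> V \<times> V \<Longrightarrow> out_nbrs E u \<subseteq> V"
  and in_nbrs_subset: "E \<subseteq> V \<times> V \<Longrightarrow> in_nbrs E u \<subseteq> V"
  unfolding out_nbrs_def in_nbrs_def by auto

lemma bij_betw_if_inj_on_card_eq:
  assumes "finite B" "inj_on f A" "f ` A \<subseteq> B" "card A = card B"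
  shows "bij_betw f A B"
  using assms card_subset_eq[OF assms(1,3)] by (simp add: bij_betw_def card_image)

lemma graph_eq_converse_graph:
  assumes "bij_betw h A B"
  shows "(\<lambda>x. (x, h x)) ` A = (\<lambda>y. (inv_into A h y, y)) ` B"
proof -
  have "(\<lambda>y. (inv_into A h y, y)) ` B = (\<lambda>y. (inv_into A h y, y)) ` h ` A"
    using assms by (simp add: bij_betw_def)
  also have "\<dots> = (\<lambda>x. (x, h x)) ` A"
    using assms by (auto simp: image_image bij_betw_inv_into_left intro!: image_cong)
  finally show ?thesis ..
qed

lemma sum_graph: "(\<Sum>(x, y)\<in>(\<lambda>x. (x, f x)) ` A. F x y) = (\<Sum>x\<in>A. F x (f x))"
  by (simp add: sum.reindex[OF inj_on_convol_ident])

lemma min_le_sqrt_mult: "real (min a b) \<le> sqrt (real a * real b)"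
proof (rule real_le_rsqrt)
  show "(real (min a b))\<^sup>2 \<le> real a * real b"
    by (cases "a \<le> b") (auto simp: power2_eq_square intro: mult_left_mono mult_right_mono)
qed

lemma min_eq_sqrt_mult_iff:
  assumes "0 < a" "0 < b"
  shows "real (min a b) = sqrt (real a * real b) \<longleftrightarrow> a = b"
proof
  assume "real (min a b) = sqrt (real a * real b)"
  then have "(real (min a b))\<^sup>2 = real a * real b"
    by simp
  then have "min a b * min a b = a * b"
    by (simp add: power2_eq_square flip: of_nat_mult)
  then show "a = b"
    using assms by (cases "a \<le> b") (auto simp: min_def)
qed simp

lemma convergent_if_dist_Suc_le_geometric:
  fixes f :: "nat \<Rightarrow> real"
  assumes "0 \<le> q" "q < 1" "\<And>k. \<bar>f (Suc k) - f k\<bar> \<le> q ^ k"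
  shows "convergent f"
proof -
  have "summable (\<lambda>k. f (Suc k) - f k)"
    by (rule summable_comparison_test'[OF summable_geometric[of q], of 0]) (use assms in auto)
  then have "convergent (\<lambda>n. \<Sum>k<n. f (Suc k) - f k)"
    by (simp add: summable_iff_convergent)
  then show ?thesis
    by (simp add: sum_lessThan_telescope convergent_diff_const_right_iff)
qed

lemma convex_comb3_bounds:
  fixes a b c wp wm :: real
  assumes "0 < wp" "0 < wm" "wp + wm < 1" "0 \<le> a" "a \<le> 1" "0 \<le> b" "b \<le> 1" "0 \<le> c" "c \<le> 1"
  shows "0 \<le> wp * a + wm * b + (1 - wp - wm) * c \<and> wp * a + wm * b + (1 - wp - wm) * c \<le> 1"
proof -
  have "wp * a \<le> wp" "wm * b \<le> wm" "(1 - wp - wm) * c \<le> 1 - wp - wm"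
    using assms by (auto intro: mult_left_le)
  moreover have "0 \<le> wp * a" "0 \<le> wm * b" "0 \<le> (1 - wp - wm) * c"
    using assms by auto
  ultimately show ?thesis by linarith
qed

lemma convex_comb3_eq_1_iff:
  fixes a b c wp wm :: real
  assumes "0 < wp" "0 < wm" "wp + wm < 1" "a \<le> 1" "b \<le> 1" "c \<le> 1"
  shows "wp * a + wm * b + (1 - wp - wm) * c = 1 \<longleftrightarrow> a = 1 \<and> b = 1 \<and> c = 1"
proof
  assume "wp * a + wm * b + (1 - wp - wm) * c = 1"
  then have "wp * (1 - a) + wm * (1 - b) + (1 - wp - wm) * (1 - c) = 0"
    by (simp add: algebra_simps)
  moreover have "0 \<le> wp * (1 - a)" "0 \<le> wm * (1 - b)" "0 \<le> (1 - wp - wm) * (1 - c)"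
    using assms by auto
  ultimately have "wp * (1 - a) = 0" "wm * (1 - b) = 0" "(1 - wp - wm) * (1 - c) = 0"
    by linarith+
  then show "a = 1 \<and> b = 1 \<and> c = 1"
    using assms(1-3) by auto
qed simp

section \<open>Matchings\<close>

lemma inj_matchingsD:
  assumes "finite S1" "finite S2" "g \<in> inj_matchings S1 S2"
  shows "g \<subseteq> S1 \<times> S2" "finite g" "card g = min (card S1) (card S2)"
proof -
  have "g \<subseteq> S1 \<times> S2 \<and> finite g \<and> card g = min (card S1) (card S2)"
  proof (cases "card S1 \<le> card S2")
    case True
    then obtain f where "inj_on f S1" "f ` S1 \<subseteq> S2" "g = (\<lambda>x. (x, f x)) ` S1"
      using assms(3) unfolding inj_matchings_def by auto
    then show ?thesis
      using True assms(1) by (auto simp: card_image[OF inj_on_convol_ident])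
  next
    case False
    then obtain f where "inj_on f S2" "f ` S2 \<subseteq> S1" "g = (\<lambda>y. (f y, y)) ` S2"
      using assms(3) unfolding inj_matchings_def by auto
    moreover have "inj_on (\<lambda>y. (f y, y)) S2"
      by (auto simp: inj_on_def)
    ultimately show ?thesis
      using False assms(2) by (auto simp: card_image)
  qed
  then show "g \<subseteq> S1 \<times> S2" "finite g" "card g = min (card S1) (card S2)"
    by auto
qed

lemma finite_inj_matchings:
  assumes "finite S1" "finite S2"
  shows "finite (inj_matchings S1 S2)"
proof (rule finite_subset)
  show "inj_matchings S1 S2 \<subseteq> Pow (S1 \<times> S2)"
    using inj_matchingsD(1)[OF assms] by blast
qed (use assms in simp)

lemma inj_matchings_nonempty:
  assumes "finite S1" "finite S2"
  shows "inj_matchings S1 S2 \<noteq> {}"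
proof (cases "card S1 \<le> card S2")
  case True
  then obtain f where "f ` S1 \<subseteq> S2" "inj_on f S1"
    using card_le_inj[OF assms True] by blast
  then have "(\<lambda>x. (x, f x)) ` S1 \<in> inj_matchings S1 S2"
    using True by (simp add: inj_matchings_def) blast
  then show ?thesis
    by blast
next
  case False
  then obtain f where "f ` S2 \<subseteq> S1" "inj_on f S2"
    using card_le_inj[OF assms(2,1)] by (meson nat_le_linear)
  then have "(\<lambda>y. (f y, y)) ` S2 \<in> inj_matchings S1 S2"
    using False by (simp add: inj_matchings_def) blast
  then show ?thesis
    by blast
qed

lemma inj_matchings_image:
  "inj_matchings S1 S2 =
     (if card S1 \<le> card S2
      then (\<lambda>f. (\<lambda>x. (x, f x)) ` S1) ` {f. inj_on f S1 \<and> f ` S1 \<subseteq> S2}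
      else (\<lambda>f. (\<lambda>y. (f y, y)) ` S2) ` {f. inj_on f S2 \<and> f ` S2 \<subseteq> S1})"
  by (auto simp: inj_matchings_def)

lemma inj_matchings_card_eq:
  assumes "finite S2" "card S1 = card S2"
  shows "inj_matchings S1 S2 = (\<lambda>f. (\<lambda>x. (x, f x)) ` S1) ` {f. bij_betw f S1 S2}"
proof -
  have "inj_on f S1 \<and> f ` S1 \<subseteq> S2 \<longleftrightarrow> bij_betw f S1 S2" for f
    using assms bij_betw_if_inj_on_card_eq by (auto simp: bij_betw_def)
  then show ?thesis
    using assms(2) by (simp add: inj_matchings_image)
qed

lemma inj_matchings_swap:
  assumes "finite S1" "finite S2"
  shows "inj_matchings S2 S1 = (\<lambda>g. prod.swap ` g) ` inj_matchings S1 S2"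
proof (cases "card S1 = card S2")
  case True
  show ?thesis
  proof (intro equalityI subsetI)
    fix g assume "g \<in> inj_matchings S2 S1"
    then obtain h where h: "bij_betw h S2 S1" "g = (\<lambda>x. (x, h x)) ` S2"
      using assms True by (auto simp: inj_matchings_card_eq)
    show "g \<in> (\<lambda>g. prod.swap ` g) ` inj_matchings S1 S2"
    proof (rule image_eqI)
      show "g = prod.swap ` (\<lambda>x. (x, inv_into S2 h x)) ` S1"
        by (simp add: h(2) graph_eq_converse_graph[OF h(1)] image_image)
      show "(\<lambda>x. (x, inv_into S2 h x)) ` S1 \<in> inj_matchings S1 S2"
        using assms True bij_betw_inv_into[OF h(1)] by (auto simp: inj_matchings_card_eq)
    qed
  next
    fix g assume "g \<in> (\<lambda>g. prod.swap ` g) ` inj_matchings S1 S2"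
    then obtain f where f: "bij_betw f S1 S2" "g = prod.swap ` (\<lambda>x. (x, f x)) ` S1"
      using assms True by (auto simp: inj_matchings_card_eq)
    then have "g = (\<lambda>x. (x, inv_into S1 f x)) ` S2"
      by (simp add: graph_eq_converse_graph[OF f(1)] image_image)
    then show "g \<in> inj_matchings S2 S1"
      using assms True bij_betw_inv_into[OF f(1)] by (auto simp: inj_matchings_card_eq)
  qed
next
  case False
  then show ?thesis
    by (auto simp: inj_matchings_image image_image)
qed

section \<open>The matching similarity A\<close>

definition max_matching_weight :: "('a \<Rightarrow> 'b \<Rightarrow> real) \<Rightarrow> 'a set \<Rightarrow> 'b set \<Rightarrow> real" where
  "max_matching_weight F S1 S2 = Max ((\<lambda>g. \<Sum>(x, y)\<in>g. F x y) ` inj_matchings S1 S2)"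

lemma A_sim_eq:
  "S1 \<noteq> {} \<Longrightarrow> S2 \<noteq> {} \<Longrightarrow>
   A_sim F S1 S2 = max_matching_weight F S1 S2 / sqrt (real (card S1) * real (card S2))"
  by (simp add: A_sim_def max_matching_weight_def)

lemma max_matching_weight_ge:
  assumes "finite S1" "finite S2" "g \<in> inj_matchings S1 S2"
  shows "(\<Sum>(x, y)\<in>g. F x y) \<le> max_matching_weight F S1 S2"
  unfolding max_matching_weight_def using assms by (simp add: finite_inj_matchings)

lemma max_matching_weight_attained:
  assumes "finite S1" "finite S2"
  obtains g where "g \<in> inj_matchings S1 S2" "max_matching_weight F S1 S2 = (\<Sum>(x, y)\<in>g. F x y)"
proof -
  have "max_matching_weight F S1 S2 \<in> (\<lambda>g. \<Sum>(x, y)\<in>g. F x y) ` inj_matchings S1 S2"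
    unfolding max_matching_weight_def
    using assms by (intro Max_in) (auto simp: finite_inj_matchings inj_matchings_nonempty)
  then show ?thesis
    using that by blast
qed

lemma max_matching_weight_nonneg:
  assumes "finite S1" "finite S2" "\<And>x y. x \<in> S1 \<Longrightarrow> y \<in> S2 \<Longrightarrow> 0 \<le> F x y"
  shows "0 \<le> max_matching_weight F S1 S2"
proof -
  obtain g where g: "g \<in> inj_matchings S1 S2"
    using inj_matchings_nonempty[OF assms(1,2)] by blast
  have "0 \<le> (\<Sum>(x, y)\<in>g. F x y)"
    using inj_matchingsD(1)[OF assms(1,2) g] assms(3) by (intro sum_nonneg) auto
  also have "\<dots> \<le> max_matching_weight F S1 S2"
    by (rule max_matching_weight_ge[OF assms(1,2) g])
  finally show ?thesis .
qed

lemma max_matching_weight_le_min_card: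
  assumes "finite S1" "finite S2" "\<And>x y. x \<in> S1 \<Longrightarrow> y \<in> S2 \<Longrightarrow> F x y \<le> 1"
  shows "max_matching_weight F S1 S2 \<le> real (min (card S1) (card S2))"
proof -
  obtain g where g: "g \<in> inj_matchings S1 S2" "max_matching_weight F S1 S2 = (\<Sum>(x, y)\<in>g. F x y)"
    using max_matching_weight_attained[OF assms(1,2)] .
  have "(\<Sum>(x, y)\<in>g. F x y) \<le> (\<Sum>p\<in>g. 1)"
    using inj_matchingsD(1)[OF assms(1,2) g(1)] assms(3) by (intro sum_mono) auto
  then show ?thesis
    using g inj_matchingsD(3)[OF assms(1,2) g(1)] by simp
qed

lemma max_matching_weight_lipschitz:
  assumes "finite S1" "finite S2" "\<And>x y. x \<in> S1 \<Longrightarrow> y \<in> S2 \<Longrightarrow> \<bar>F x y - G x y\<bar> \<le> e"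
  shows "\<bar>max_matching_weight F S1 S2 - max_matching_weight G S1 S2\<bar>
           \<le> real (min (card S1) (card S2)) * e"
proof -
  have sum_dist: "\<bar>(\<Sum>(x, y)\<in>g. F x y) - (\<Sum>(x, y)\<in>g. G x y)\<bar> \<le> real (min (card S1) (card S2)) * e"
    if g: "g \<in> inj_matchings S1 S2" for g
  proof -
    have "\<bar>(\<Sum>(x, y)\<in>g. F x y) - (\<Sum>(x, y)\<in>g. G x y)\<bar> = \<bar>\<Sum>(x, y)\<in>g. F x y - G x y\<bar>"
      by (simp add: sum_subtractf case_prod_unfold)
    also have "\<dots> \<le> (\<Sum>(x, y)\<in>g. \<bar>F x y - G x y\<bar>)"
      unfolding case_prod_unfold by (rule sum_abs)
    also have "\<dots> \<le> (\<Sum>p\<in>g. e)"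
      using inj_matchingsD(1)[OF assms(1,2) g] assms(3) by (intro sum_mono) auto
    finally show ?thesis
      using inj_matchingsD(3)[OF assms(1,2) g] by simp
  qed
  obtain g1 where g1: "g1 \<in> inj_matchings S1 S2" "max_matching_weight F S1 S2 = (\<Sum>(x, y)\<in>g1. F x y)"
    using max_matching_weight_attained[OF assms(1,2)] .
  obtain g2 where g2: "g2 \<in> inj_matchings S1 S2" "max_matching_weight G S1 S2 = (\<Sum>(x, y)\<in>g2. G x y)"
    using max_matching_weight_attained[OF assms(1,2)] .
  show ?thesis
    using sum_dist[OF g1(1)] sum_dist[OF g2(1)] g1 g2
      max_matching_weight_ge[OF assms(1,2) g1(1), of G] max_matching_weight_ge[OF assms(1,2) g2(1), of F]
    by linarith
qed

lemma max_matching_weight_swap: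
  assumes "finite S1" "finite S2"
  shows "max_matching_weight (\<lambda>y x. F x y) S2 S1 = max_matching_weight F S1 S2"
proof -
  have "(\<Sum>(y, x)\<in>prod.swap ` g. F x y) = (\<Sum>(x, y)\<in>g. F x y)" for g
    by (simp add: sum.reindex case_prod_unfold)
  then show ?thesis
    unfolding max_matching_weight_def inj_matchings_swap[OF assms] image_image by simp
qed

lemma A_sim_nonneg:
  assumes "finite S1" "finite S2" "\<And>x y. x \<in> S1 \<Longrightarrow> y \<in> S2 \<Longrightarrow> 0 \<le> F x y"
  shows "0 \<le> A_sim F S1 S2"
proof (cases "S1 = {} \<or> S2 = {}")
  case False
  then show ?thesis
    using max_matching_weight_nonneg[of S1 S2 F, OF assms] by (simp add: A_sim_eq)
qed (auto simp: A_sim_def)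

lemma A_sim_le_1:
  assumes "finite S1" "finite S2" "\<And>x y. x \<in> S1 \<Longrightarrow> y \<in> S2 \<Longrightarrow> F x y \<le> 1"
  shows "A_sim F S1 S2 \<le> 1"
proof (cases "S1 = {} \<or> S2 = {}")
  case False
  define s where "s = sqrt (real (card S1) * real (card S2))"
  have "0 < s"
    using False assms(1,2) by (simp add: s_def card_gt_0_iff)
  moreover have "max_matching_weight F S1 S2 \<le> s"
    using max_matching_weight_le_min_card[of S1 S2 F, OF assms] min_le_sqrt_mult[of "card S1" "card S2"]
    unfolding s_def by linarith
  ultimately show ?thesis
    using False by (simp add: A_sim_eq s_def[symmetric])
qed (auto simp: A_sim_def)

lemma A_sim_lipschitz:
  assumes "finite S1" "finite S2" "0 \<le> e" "\<And>x y. x \<in> S1 \<Longrightarrow> y \<in> S2 \<Longrightarrow> \<bar>F x y - G x y\<bar> \<le> e"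
  shows "\<bar>A_sim F S1 S2 - A_sim G S1 S2\<bar> \<le> e"
proof (cases "S1 = {} \<or> S2 = {}")
  case False
  define s where "s = sqrt (real (card S1) * real (card S2))"
  have "0 < s"
    using False assms(1,2) by (simp add: s_def card_gt_0_iff)
  have "\<bar>max_matching_weight F S1 S2 - max_matching_weight G S1 S2\<bar> \<le> real (min (card S1) (card S2)) * e"
    by (rule max_matching_weight_lipschitz[of S1 S2 F G, OF assms(1,2,4)])
  also have "\<dots> \<le> s * e"
    using assms(3) min_le_sqrt_mult unfolding s_def by (rule mult_right_mono[rotated])
  finally show ?thesis
    using False \<open>0 < s\<close> by (simp add: A_sim_eq s_def[symmetric] diff_divide_distrib[symmetric] field_simps)
qed (use assms(3) in \<open>auto simp: A_sim_def\<close>)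

lemma A_sim_cong:
  assumes "finite S1" "finite S2" "\<And>x y. x \<in> S1 \<Longrightarrow> y \<in> S2 \<Longrightarrow> F x y = G x y"
  shows "A_sim F S1 S2 = A_sim G S1 S2"
  using A_sim_lipschitz[OF assms(1,2) order_refl, of F G] assms(3) by simp

lemma A_sim_swap:
  assumes "finite S1" "finite S2"
  shows "A_sim (\<lambda>y x. F x y) S2 S1 = A_sim F S1 S2"
proof (cases "S1 = {} \<or> S2 = {}")
  case False
  then show ?thesis
    using max_matching_weight_swap[OF assms, of F] by (simp add: A_sim_eq mult.commute)
qed (auto simp: A_sim_def)

lemma tendsto_A_sim:
  assumes "finite S1" "finite S2" "\<And>x y. x \<in> S1 \<Longrightarrow> y \<in> S2 \<Longrightarrow> (\<lambda>k. F k x y) \<longlonglongrightarrow> G x y"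
  shows "(\<lambda>k. A_sim (F k) S1 S2) \<longlonglongrightarrow> A_sim G S1 S2"
proof -
  define e where "e k = (\<Sum>p\<in>S1 \<times> S2. \<bar>F k (fst p) (snd p) - G (fst p) (snd p)\<bar>)" for k
  have "e \<longlonglongrightarrow> (\<Sum>p\<in>S1 \<times> S2. 0)"
    unfolding e_def
  proof (rule tendsto_sum)
    fix p assume "p \<in> S1 \<times> S2"
    then show "(\<lambda>k. \<bar>F k (fst p) (snd p) - G (fst p) (snd p)\<bar>) \<longlonglongrightarrow> 0"
      by (intro tendsto_rabs_zero LIM_zero assms(3)) auto
  qed
  then have e_lim: "e \<longlonglongrightarrow> 0"
    by simp
  have bound: "\<bar>A_sim (F k) S1 S2 - A_sim G S1 S2\<bar> \<le> e k" for k
  proof (rule A_sim_lipschitz[OF assms(1,2)])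
    show "0 \<le> e k"
      unfolding e_def by (intro sum_nonneg) auto
    show "\<bar>F k x y - G x y\<bar> \<le> e k" if "x \<in> S1" "y \<in> S2" for x y
      using member_le_sum[of "(x, y)" "S1 \<times> S2" "\<lambda>p. \<bar>F k (fst p) (snd p) - G (fst p) (snd p)\<bar>"]
        that assms(1,2) unfolding e_def by simp
  qed
  have "(\<lambda>k. A_sim (F k) S1 S2 - A_sim G S1 S2) \<longlonglongrightarrow> 0"
  proof (rule tendsto_0_le[OF e_lim, where K = 1])
    show "\<forall>\<^sub>F k in sequentially. norm (A_sim (F k) S1 S2 - A_sim G S1 S2) \<le> norm (e k) * 1"
      using order_trans[OF bound abs_ge_self] by (simp add: always_eventually)
  qed
  then show ?thesis
    by (rule LIM_zero_cancel)
qed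

definition bij_matched :: "('a \<Rightarrow> 'b \<Rightarrow> bool) \<Rightarrow> 'a set \<Rightarrow> 'b set \<Rightarrow> bool" where
  "bij_matched P S1 S2 \<longleftrightarrow> (\<exists>lam. bij_betw lam S1 S2 \<and> (\<forall>x\<in>S1. P x (lam x)))"

lemma bij_matched_mono:
  assumes "bij_matched P S1 S2" "\<And>x y. x \<in> S1 \<Longrightarrow> y \<in> S2 \<Longrightarrow> P x y \<Longrightarrow> Q x y"
  shows "bij_matched Q S1 S2"
  using assms unfolding bij_matched_def by (metis bij_betwE)

lemma A_sim_eq_1_imp_bij_betw:
  assumes "finite S1" "finite S2" "\<And>x y. x \<in> S1 \<Longrightarrow> y \<in> S2 \<Longrightarrow> F x y \<le> 1"
    and "A_sim F S1 S2 = 1"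
  shows "\<exists>lam. bij_betw lam S1 S2 \<and> (\<forall>x\<in>S1. F x (lam x) = 1)"
proof (cases "S1 = {} \<or> S2 = {}")
  case True
  then have "S1 = {}" "S2 = {}"
    using assms(4) by (auto simp: A_sim_def split: if_splits)
  then show ?thesis
    by (simp add: bij_betw_def)
next
  case False
  then have pos: "0 < card S1" "0 < card S2"
    using assms(1,2) by (auto simp: card_gt_0_iff)
  have "0 < sqrt (real (card S1) * real (card S2))"
    using pos by simp
  then have max_eq: "max_matching_weight F S1 S2 = sqrt (real (card S1) * real (card S2))"
    using assms(4) False by (simp add: A_sim_eq divide_eq_1_iff)
  then have "real (min (card S1) (card S2)) = sqrt (real (card S1) * real (card S2))"
    using max_matching_weight_le_min_card[of S1 S2 F, OF assms(1-3)] min_le_sqrt_mult[of "card S1" "card S2"]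
    by linarith
  then have eq: "card S1 = card S2"
    using min_eq_sqrt_mult_iff[OF pos] by simp
  obtain g where g: "g \<in> inj_matchings S1 S2" "max_matching_weight F S1 S2 = (\<Sum>(x, y)\<in>g. F x y)"
    using max_matching_weight_attained[OF assms(1,2)] .
  then obtain lam where lam: "bij_betw lam S1 S2" "g = (\<lambda>x. (x, lam x)) ` S1"
    using eq assms(2) by (auto simp: inj_matchings_card_eq)
  have sum_eq: "(\<Sum>x\<in>S1. F x (lam x)) = (\<Sum>x\<in>S1. 1)"
    using g(2) max_eq eq by (simp add: lam(2) sum_graph)
  have le_1: "F x (lam x) \<le> 1" if "x \<in> S1" for x
    using assms(3) that bij_betwE[OF lam(1)] by blast
  have "F x (lam x) = 1" if "x \<in> S1" for x
    using sum_mono_inv[OF sum_eq le_1 that assms(1)] .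
  then show ?thesis
    using lam(1) by blast
qed

lemma A_sim_eq_1_if_bij_betw:
  assumes "finite S1" "finite S2" "\<And>x y. x \<in> S1 \<Longrightarrow> y \<in> S2 \<Longrightarrow> F x y \<le> 1"
    and "bij_betw lam S1 S2" "\<And>x. x \<in> S1 \<Longrightarrow> F x (lam x) = 1"
  shows "A_sim F S1 S2 = 1"
proof (cases "S1 = {}")
  case False
  have eq: "card S1 = card S2"
    using bij_betw_same_card[OF assms(4)] .
  then have ne: "S2 \<noteq> {}"
    using False assms(1) by auto
  have "real (card S1) = (\<Sum>(x, y)\<in>(\<lambda>x. (x, lam x)) ` S1. F x y)"
    using assms(5) by (simp add: sum_graph)
  also have "\<dots> \<le> max_matching_weight F S1 S2"
    using assms(2,4) eq by (intro max_matching_weight_ge[OF assms(1,2)]) (auto simp: inj_matchings_card_eq)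
  finally have "max_matching_weight F S1 S2 = real (card S1)"
    using max_matching_weight_le_min_card[of S1 S2 F, OF assms(1-3)] eq by simp
  then show ?thesis
    using False ne eq assms(1,2) by (simp add: A_sim_eq card_gt_0_iff)
qed (use assms(4) in \<open>auto simp: A_sim_def bij_betw_def\<close>)

lemma A_sim_eq_1_iff:
  assumes "finite S1" "finite S2" "\<And>x y. x \<in> S1 \<Longrightarrow> y \<in> S2 \<Longrightarrow> F x y \<le> 1"
  shows "A_sim F S1 S2 = 1 \<longleftrightarrow> bij_matched (\<lambda>x y. F x y = 1) S1 S2"
  using A_sim_eq_1_imp_bij_betw[of S1 S2 F, OF assms] A_sim_eq_1_if_bij_betw[of S1 S2 F, OF assms]
  unfolding bij_matched_def by blast

section \<open>Convergence of the iteration\<close>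

locale fsim_graphs =
  fixes V1 :: "'a set" and E1 :: "('a \<times> 'a) set" and V2 :: "'b set" and E2 :: "('b \<times> 'b) set"
    and L :: "'a \<Rightarrow> 'b \<Rightarrow> real" and wp wm :: real
  assumes finite_V1: "finite V1" and finite_V2: "finite V2"
    and E1_subset: "E1 \<subseteq> V1 \<times> V1" and E2_subset: "E2 \<subseteq> V2 \<times> V2"
    and L_bounds: "\<And>u v. u \<in> V1 \<Longrightarrow> v \<in> V2 \<Longrightarrow> 0 \<le> L u v \<and> L u v \<le> 1"
    and wp_pos: "0 < wp" and wm_pos: "0 < wm" and weights_lt_1: "wp + wm < 1"
begin

abbreviation F :: "nat \<Rightarrow> 'a \<Rightarrow> 'b \<Rightarrow> real" where
  "F \<equiv> F_sim E1 E2 L wp wm"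

abbreviation FSim :: "'a \<Rightarrow> 'b \<Rightarrow> real" where
  "FSim \<equiv> FSim_bj E1 E2 L wp wm"

definition step :: "('a \<Rightarrow> 'b \<Rightarrow> real) \<Rightarrow> 'a \<Rightarrow> 'b \<Rightarrow> real" where
  "step G u v = wp * A_sim G (out_nbrs E1 u) (out_nbrs E2 v)
                + wm * A_sim G (in_nbrs E1 u) (in_nbrs E2 v) + (1 - wp - wm) * L u v"

lemma F_Suc: "F (Suc k) = step (F k)"
  by (simp add: step_def fun_eq_iff)

lemma nbrs_subset:
  "out_nbrs E1 u \<subseteq> V1" "out_nbrs E2 v \<subseteq> V2" "in_nbrs E1 u \<subseteq> V1" "in_nbrs E2 v \<subseteq> V2"
  by (rule out_nbrs_subset in_nbrs_subset; rule E1_subset E2_subset)+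

lemma nbrs_finite:
  "finite (out_nbrs E1 u)" "finite (out_nbrs E2 v)" "finite (in_nbrs E1 u)" "finite (in_nbrs E2 v)"
  by (rule finite_subset[OF nbrs_subset(1) finite_V1] finite_subset[OF nbrs_subset(2) finite_V2]
      finite_subset[OF nbrs_subset(3) finite_V1] finite_subset[OF nbrs_subset(4) finite_V2])+

lemmas nbrs_in_V = nbrs_subset[THEN subsetD]

lemma step_bounds:
  assumes "\<And>x y. x \<in> V1 \<Longrightarrow> y \<in> V2 \<Longrightarrow> 0 \<le> G x y \<and> G x y \<le> 1" "u \<in> V1" "v \<in> V2"
  shows "0 \<le> step G u v \<and> step G u v \<le> 1"
  unfolding step_def using assms nbrs_in_V L_bounds
  by (intro convex_comb3_bounds wp_pos wm_pos weights_lt_1 A_sim_nonneg A_sim_le_1 nbrs_finite) auto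

lemma step_contraction:
  assumes "0 \<le> e" "\<And>x y. x \<in> V1 \<Longrightarrow> y \<in> V2 \<Longrightarrow> \<bar>G x y - H x y\<bar> \<le> e" "u \<in> V1" "v \<in> V2"
  shows "\<bar>step G u v - step H u v\<bar> \<le> (wp + wm) * e"
proof -
  define a where "a = A_sim G (out_nbrs E1 u) (out_nbrs E2 v) - A_sim H (out_nbrs E1 u) (out_nbrs E2 v)"
  define b where "b = A_sim G (in_nbrs E1 u) (in_nbrs E2 v) - A_sim H (in_nbrs E1 u) (in_nbrs E2 v)"
  have "\<bar>a\<bar> \<le> e" "\<bar>b\<bar> \<le> e"
    unfolding a_def b_def using assms nbrs_in_V
    by (auto intro!: A_sim_lipschitz nbrs_finite)
  have "\<bar>step G u v - step H u v\<bar> = \<bar>wp * a + wm * b\<bar>"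
    by (simp add: step_def a_def b_def algebra_simps)
  also have "\<dots> \<le> wp * \<bar>a\<bar> + wm * \<bar>b\<bar>"
    using wp_pos wm_pos by (simp add: abs_mult abs_triangle_ineq[THEN order_trans])
  also have "\<dots> \<le> (wp + wm) * e"
    using \<open>\<bar>a\<bar> \<le> e\<close> \<open>\<bar>b\<bar> \<le> e\<close> wp_pos wm_pos by (simp add: distrib_right mult_left_mono add_mono)
  finally show ?thesis .
qed

lemma F_bounds: "u \<in> V1 \<Longrightarrow> v \<in> V2 \<Longrightarrow> 0 \<le> F k u v \<and> F k u v \<le> 1"
proof (induction k arbitrary: u v)
  case 0
  then show ?case
    using L_bounds by simp
next
  case (Suc k)
  then show ?case
    unfolding F_Suc by (intro step_bounds) auto
qed

lemma F_dist_Suc: "u \<in> V1 \<Longrightarrow> v \<in> V2 \<Longrightarrow> \<bar>F (Suc k) u v - F k u v\<bar> \<le> (wp + wm) ^ k"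
proof (induction k arbitrary: u v)
  case 0
  then show ?case
    using F_bounds[of u v 0] F_bounds[of u v 1] by auto
next
  case (Suc k)
  have "F (Suc (Suc k)) u v - F (Suc k) u v = step (F (Suc k)) u v - step (F k) u v"
    by (simp only: F_Suc)
  also have "\<bar>\<dots>\<bar> \<le> (wp + wm) * (wp + wm) ^ k"
    using Suc wp_pos wm_pos by (intro step_contraction) auto
  finally show ?case
    by simp
qed

lemma F_convergent: "u \<in> V1 \<Longrightarrow> v \<in> V2 \<Longrightarrow> convergent (\<lambda>k. F k u v)"
  using wp_pos wm_pos weights_lt_1
  by (intro convergent_if_dist_Suc_le_geometric[of "wp + wm"] F_dist_Suc) auto

lemma F_tendsto_FSim: "u \<in> V1 \<Longrightarrow> v \<in> V2 \<Longrightarrow> (\<lambda>k. F k u v) \<longlonglongrightarrow> FSim u v"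
  using F_convergent by (simp add: FSim_bj_def convergent_LIMSEQ_iff)

lemma FSim_bounds:
  assumes "u \<in> V1" "v \<in> V2"
  shows "0 \<le> FSim u v \<and> FSim u v \<le> 1"
  using tendsto_lowerbound[OF F_tendsto_FSim] tendsto_upperbound[OF F_tendsto_FSim] F_bounds assms
  by (meson eventually_sequentiallyI trivial_limit_sequentially)

lemma FSim_fixed_point:
  assumes "u \<in> V1" "v \<in> V2"
  shows "FSim u v = step FSim u v"
proof (rule LIMSEQ_unique)
  show "(\<lambda>k. F (Suc k) u v) \<longlonglongrightarrow> FSim u v"
    using LIMSEQ_Suc[OF F_tendsto_FSim[OF assms]] .
  show "(\<lambda>k. F (Suc k) u v) \<longlonglongrightarrow> step FSim u v"
    unfolding F_Suc step_def using assms nbrs_in_V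
    by (intro tendsto_add tendsto_mult tendsto_const tendsto_A_sim nbrs_finite F_tendsto_FSim) auto
qed

section \<open>Exchanging the two graphs\<close>

lemma F_transpose:
  assumes "\<And>u v. u \<in> V1 \<Longrightarrow> v \<in> V2 \<Longrightarrow> L u v = L' v u" "u \<in> V1" "v \<in> V2"
  shows "F k u v = F_sim E2 E1 L' wp wm k v u"
  using assms(2,3)
proof (induction k arbitrary: u v)
  case 0
  then show ?case
    using assms(1) by simp
next
  case (Suc k)
  have A_eq: "A_sim (F k) S1 S2 = A_sim (F_sim E2 E1 L' wp wm k) S2 S1"
    if "S1 \<subseteq> V1" "S2 \<subseteq> V2" for S1 S2
  proof -
    have fin: "finite S1" "finite S2"
      using that finite_V1 finite_V2 finite_subset by blast+
    have "A_sim (F_sim E2 E1 L' wp wm k) S2 S1 = A_sim (\<lambda>y x. F k x y) S2 S1"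
      using Suc.IH that by (intro A_sim_cong[OF fin(2,1)]) (auto simp: subset_iff)
    also have "\<dots> = A_sim (F k) S1 S2"
      by (rule A_sim_swap[OF fin])
    finally show ?thesis ..
  qed
  show ?case
    using Suc.prems assms(1) by (simp add: A_eq nbrs_subset)
qed

lemma FSim_transpose:
  assumes "\<And>u v. u \<in> V1 \<Longrightarrow> v \<in> V2 \<Longrightarrow> L u v = L' v u" "u \<in> V1" "v \<in> V2"
  shows "FSim u v = FSim_bj E2 E1 L' wp wm v u"
  using F_transpose[OF assms] by (simp add: FSim_bj_def)

end

section \<open>Similarity one and bijective simulations\<close>

lemma bij_simulation_iff:
  "bij_simulation V1 E1 l1 V2 E2 l2 R \<longleftrightarrow> R \<subseteq> V1 \<times> V2 \<and>
     (\<forall>(u, v)\<in>R. l1 u = l2 v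
        \<and> bij_matched (\<lambda>x y. (x, y) \<in> R) (out_nbrs E1 u) (out_nbrs E2 v)
        \<and> bij_matched (\<lambda>x y. (x, y) \<in> R) (in_nbrs E1 u) (in_nbrs E2 v))"
  by (simp add: bij_simulation_def bij_matched_def)

lemma bij_simulationD:
  assumes "bij_simulation V1 E1 l1 V2 E2 l2 R" "(u, v) \<in> R"
  shows "u \<in> V1" "v \<in> V2" "l1 u = l2 v"
    "bij_matched (\<lambda>x y. (x, y) \<in> R) (out_nbrs E1 u) (out_nbrs E2 v)"
    "bij_matched (\<lambda>x y. (x, y) \<in> R) (in_nbrs E1 u) (in_nbrs E2 v)"
  using assms unfolding bij_simulation_iff by blast+

locale fsim_labelled_graphs = fsim_graphs V1 E1 V2 E2 L wp wm
  for V1 :: "'a set" and E1 :: "('a \<times> 'a) set" and V2 :: "'b set" and E2 :: "('b \<times> 'b) set"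
    and L :: "'a \<Rightarrow> 'b \<Rightarrow> real" and wp wm :: real +
  fixes l1 :: "'a \<Rightarrow> 'l" and l2 :: "'b \<Rightarrow> 'l"
  assumes L_eq_1_iff: "\<And>u v. u \<in> V1 \<Longrightarrow> v \<in> V2 \<Longrightarrow> L u v = 1 \<longleftrightarrow> l1 u = l2 v"
begin

lemma step_eq_1_iff:
  assumes "\<And>x y. x \<in> V1 \<Longrightarrow> y \<in> V2 \<Longrightarrow> G x y \<le> 1" "u \<in> V1" "v \<in> V2"
  shows "step G u v = 1 \<longleftrightarrow> l1 u = l2 v
    \<and> bij_matched (\<lambda>x y. G x y = 1) (out_nbrs E1 u) (out_nbrs E2 v)
    \<and> bij_matched (\<lambda>x y. G x y = 1) (in_nbrs E1 u) (in_nbrs E2 v)"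
proof -
  have G_le: "\<And>x y. x \<in> out_nbrs E1 u \<Longrightarrow> y \<in> out_nbrs E2 v \<Longrightarrow> G x y \<le> 1"
    "\<And>x y. x \<in> in_nbrs E1 u \<Longrightarrow> y \<in> in_nbrs E2 v \<Longrightarrow> G x y \<le> 1"
    using assms(1) nbrs_in_V by blast+
  have "step G u v = 1 \<longleftrightarrow> A_sim G (out_nbrs E1 u) (out_nbrs E2 v) = 1
      \<and> A_sim G (in_nbrs E1 u) (in_nbrs E2 v) = 1 \<and> L u v = 1"
    unfolding step_def using assms(2,3) G_le L_bounds
    by (intro convex_comb3_eq_1_iff wp_pos wm_pos weights_lt_1 A_sim_le_1 nbrs_finite) auto
  then show ?thesis
    using A_sim_eq_1_iff[of _ _ G, OF nbrs_finite(1,2) G_le(1)]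
      A_sim_eq_1_iff[of _ _ G, OF nbrs_finite(3,4) G_le(2)]
      L_eq_1_iff[OF assms(2,3)]
    by blast
qed

lemma F_eq_1_on_bij_simulation:
  assumes R: "bij_simulation V1 E1 l1 V2 E2 l2 R"
  shows "(u, v) \<in> R \<Longrightarrow> F k u v = 1"
proof (induction k arbitrary: u v)
  case 0
  then show ?case
    using bij_simulationD[OF R] L_eq_1_iff by simp
next
  case (Suc k)
  note uv = bij_simulationD(1-3)[OF R Suc.prems]
  have "bij_matched (\<lambda>x y. F k x y = 1) (out_nbrs E1 u) (out_nbrs E2 v)"
    and "bij_matched (\<lambda>x y. F k x y = 1) (in_nbrs E1 u) (in_nbrs E2 v)"
    using bij_simulationD(4,5)[OF R Suc.prems] Suc.IH by (auto elim: bij_matched_mono)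
  then show ?case
    unfolding F_Suc using step_eq_1_iff[OF _ uv(1,2)] F_bounds uv(3) by blast
qed

lemma bij_simulation_FSim_eq_1:
  "bij_simulation V1 E1 l1 V2 E2 l2 {(x, y). x \<in> V1 \<and> y \<in> V2 \<and> FSim x y = 1}"
    (is "bij_simulation _ _ _ _ _ _ ?R")
  unfolding bij_simulation_iff
proof (intro conjI ballI; clarify?)
  fix u v assume uv: "u \<in> V1" "v \<in> V2" "FSim u v = 1"
  then have "step FSim u v = 1"
    using FSim_fixed_point by simp
  then have "l1 u = l2 v"
    and "bij_matched (\<lambda>x y. FSim x y = 1) (out_nbrs E1 u) (out_nbrs E2 v)"
    and "bij_matched (\<lambda>x y. FSim x y = 1) (in_nbrs E1 u) (in_nbrs E2 v)"
    using step_eq_1_iff[OF _ uv(1,2)] FSim_bounds by blast+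
  then show "l1 u = l2 v
    \<and> bij_matched (\<lambda>x y. (x, y) \<in> ?R) (out_nbrs E1 u) (out_nbrs E2 v)
    \<and> bij_matched (\<lambda>x y. (x, y) \<in> ?R) (in_nbrs E1 u) (in_nbrs E2 v)"
    using nbrs_in_V by (auto elim!: bij_matched_mono)
qed

lemma FSim_eq_1_iff:
  assumes "u \<in> V1" "v \<in> V2"
  shows "FSim u v = 1 \<longleftrightarrow> (\<exists>R. bij_simulation V1 E1 l1 V2 E2 l2 R \<and> (u, v) \<in> R)"
proof
  assume "FSim u v = 1"
  then show "\<exists>R. bij_simulation V1 E1 l1 V2 E2 l2 R \<and> (u, v) \<in> R"
    using bij_simulation_FSim_eq_1 assms by blast
next
  assume "\<exists>R. bij_simulation V1 E1 l1 V2 E2 l2 R \<and> (u, v) \<in> R"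
  then have "(\<lambda>k. F k u v) = (\<lambda>k. 1)"
    using F_eq_1_on_bij_simulation by blast
  then show "FSim u v = 1"
    using F_tendsto_FSim[OF assms] LIMSEQ_const_iff by metis
qed

end

theorem theorem3:
  fixes V1 :: "'a set" and E1 :: "('a \<times> 'a) set" and l1 :: "'a \<Rightarrow> 'l"
    and V2 :: "'b set" and E2 :: "('b \<times> 'b) set" and l2 :: "'b \<Rightarrow> 'l"
    and L :: "'a \<Rightarrow> 'b \<Rightarrow> real" and L' :: "'b \<Rightarrow> 'a \<Rightarrow> real"
    and wp wm :: real
  assumes fin1: "finite V1" and fin2: "finite V2"
    and E1: "E1 \<subseteq> V1 \<times> V1" and E2: "E2 \<subseteq> V2 \<times> V2"
    and L_range: "\<forall>u\<in>V1. \<forall>v\<in>V2. 0 \<le> L u v \<and> L u v \<le> 1"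
    and L_one: "\<forall>u\<in>V1. \<forall>v\<in>V2. L u v = 1 \<longleftrightarrow> l1 u = l2 v"
    and L'_range: "\<forall>v\<in>V2. \<forall>u\<in>V1. 0 \<le> L' v u \<and> L' v u \<le> 1"
    and L'_one: "\<forall>v\<in>V2. \<forall>u\<in>V1. L' v u = 1 \<longleftrightarrow> l2 v = l1 u"
    and w: "0 < wp" "0 < wm" "wp + wm < 1"
  shows "(\<forall>u\<in>V1. \<forall>v\<in>V2. convergent (\<lambda>k. F_sim E1 E2 L wp wm k u v))
       \<and> (\<forall>u\<in>V1. \<forall>v\<in>V2. 0 \<le> FSim_bj E1 E2 L wp wm u v \<and> FSim_bj E1 E2 L wp wm u v \<le> 1)
       \<and> (\<forall>u\<in>V1. \<forall>v\<in>V2. FSim_bj E1 E2 L wp wm u v = 1 \<longleftrightarrow>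
              (\<exists>R. bij_simulation V1 E1 l1 V2 E2 l2 R \<and> (u, v) \<in> R))
       \<and> ((\<forall>u\<in>V1. \<forall>v\<in>V2. L u v = L' v u) \<longrightarrow>
            (\<forall>u\<in>V1. \<forall>v\<in>V2. FSim_bj E1 E2 L wp wm u v = FSim_bj E2 E1 L' wp wm v u))"
proof -
  interpret fsim_labelled_graphs V1 E1 V2 E2 L wp wm l1 l2
    by unfold_locales (use assms in auto)
  have "\<forall>u\<in>V1. \<forall>v\<in>V2. convergent (\<lambda>k. F_sim E1 E2 L wp wm k u v)"
    using F_convergent by blast
  moreover have "\<forall>u\<in>V1. \<forall>v\<in>V2. 0 \<le> FSim_bj E1 E2 L wp wm u v \<and> FSim_bj E1 E2 L wp wm u v \<le> 1"
    using FSim_bounds by blast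
  moreover have "\<forall>u\<in>V1. \<forall>v\<in>V2. FSim_bj E1 E2 L wp wm u v = 1 \<longleftrightarrow>
                   (\<exists>R. bij_simulation V1 E1 l1 V2 E2 l2 R \<and> (u, v) \<in> R)"
    using FSim_eq_1_iff by blast
  moreover have "(\<forall>u\<in>V1. \<forall>v\<in>V2. L u v = L' v u) \<longrightarrow>
                   (\<forall>u\<in>V1. \<forall>v\<in>V2. FSim_bj E1 E2 L wp wm u v = FSim_bj E2 E1 L' wp wm v u)"
    using FSim_transpose[of L'] by blast
  ultimately show ?thesis
    by (intro conjI)
qed

end
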